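(* Let $\alpha\ge1/2$, $\lambda>0$, $0<a<b<1$, and let $X$ be an almost surely positive random variable. There exists a constant $A>0$ depending on the law of $X$ and on $\alpha,\lambda,a,b$ such that for all $(\tau,u)\in(a,b)\times(0,\infty)$, $$\big|\log g(\tau,u)\big|\le A+\frac{2\lambda u}{1-b}+|\alpha-1|\,|\log u|.$$
   Context: With $\mathbb{P}_X$ the law of $X$ and $I_\nu$ the modified Bessel function of the first kind, $g(\tau,u)=\frac{\lambda}{1-\tau}\big(\frac{u}{\tau}\big)^{\frac{\alpha-1}{2}}e^{-\frac{\lambda u}{1-\tau}}\int_0^\infty x^{-\frac{\alpha-1}{2}}e^{-\frac{\lambda\tau x}{1-\tau}}I_{\alpha-1}\big(\frac{2\lambda\sqrt{ux\tau}}{1-\tau}\big)\mathbb{P}_X(dx)$ (the density of the gamma smart path $X_\tau$). *)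

theory Defs
  imports "HOL-Probability.Probability"
begin

definition besselI :: "real \<Rightarrow> real \<Rightarrow> real" where
  "besselI nu z = (\<Sum>k. (z / 2) powr (2 * real k + nu) / (fact k * Gamma (real k + nu + 1)))"

text \<open>Density of the gamma smart path X_tau, where PX is the law of X.\<close>
definition gamma_path_density ::
  "real measure \<Rightarrow> real \<Rightarrow> real \<Rightarrow> real \<Rightarrow> real \<Rightarrow> real" where
  "gamma_path_density PX \<alpha> lam \<tau> u =
     lam / (1 - \<tau>) * (u / \<tau>) powr ((\<alpha> - 1) / 2) * exp (- lam * u / (1 - \<tau>)) *
     (LINT x|PX. x powr (- (\<alpha> - 1) / 2) * exp (- lam * \<tau> * x / (1 - \<tau>)) *
        besselI (\<alpha> - 1) (2 * lam * sqrt (u * x * \<tau>) / (1 - \<tau>)))"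

end

theory Submission
  imports Defs
begin

text \<open>For \<open>\<nu> = \<alpha> - 1 \<ge> -1/2\<close> the series of \<open>I\<^sub>\<nu>\<close> is dominated termwise by its first
  term times the series of \<open>cosh\<close>, so \<open>(z/2)\<^sup>\<nu>/\<Gamma>(\<nu>+1) \<le> I\<^sub>\<nu>(z) \<le> (z/2)\<^sup>\<nu>/\<Gamma>(\<nu>+1) e\<^sup>z\<close>.
  In the density the powers of \<open>x\<close> then cancel, and with \<open>c = \<lambda>/(1-\<tau>)\<close> and
  \<open>z \<le> c (u + \<tau> x)\<close> (AM-GM) the density is squeezed between
  \<open>c\<^sup>\<alpha> u\<^sup>\<alpha>\<^sup>-\<^sup>1/\<Gamma>(\<alpha>) e\<^sup>-\<^sup>c\<^sup>u E[e\<^sup>-\<^sup>d\<^sup>X]\<close> and \<open>c\<^sup>\<alpha> u\<^sup>\<alpha>\<^sup>-\<^sup>1/\<Gamma>(\<alpha>)\<close>, where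
  \<open>d = \<lambda>b/(1-b) \<ge> c\<tau>\<close> works for all \<open>\<tau> < b\<close>. Taking logarithms, with \<open>c\<close> confined to
  \<open>[\<lambda>/(1-a), \<lambda>/(1-b)]\<close>, gives the bound.\<close>

lemma pochhammer_half_le:
  fixes a :: real
  assumes "1/2 \<le> a"
  shows "pochhammer (1/2) k \<le> pochhammer a k"
  unfolding pochhammer_prod using assms by (intro prod_mono) auto

lemma fact_double_le_pochhammer:
  fixes a :: real
  assumes "1/2 \<le> a"
  shows "fact (2 * k) \<le> 4 ^ k * fact k * pochhammer a k"
proof -
  have "(fact (2 * k) :: real) = 4 ^ k * fact k * pochhammer (1/2) k"
    by (simp add: fact_double power_mult)
  also have "\<dots> \<le> 4 ^ k * fact k * pochhammer a k"
    using pochhammer_half_le[OF assms] by (intro mult_left_mono) auto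
  finally show ?thesis .
qed

lemma Gamma_add_of_nat:
  fixes z :: "'a :: Gamma"
  assumes "z \<notin> \<int>\<^sub>\<le>\<^sub>0"
  shows "Gamma (z + of_nat k) = pochhammer z k * Gamma z"
  using pochhammer_Gamma[OF assms, of k] Gamma_nonzero[OF assms] by simp

lemma cosh_sums_even: "(\<lambda>k. (z::real) ^ (2 * k) / fact (2 * k)) sums cosh z"
proof -
  have "(\<lambda>k. (\<lambda>n. if even n then z ^ n /\<^sub>R fact n else 0) (2 * k)) sums cosh z"
    by (subst sums_mono_reindex) (auto intro: strict_monoI cosh_converges)
  then show ?thesis by (simp add: divide_inverse_commute)
qed

lemma besselI_term_le:
  fixes \<nu> z :: real
  assumes "\<nu> \<ge> -1/2" and "z > 0"
  shows "(z / 2) powr (2 * real k + \<nu>) / (fact k * Gamma (real k + \<nu> + 1))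
           \<le> (z / 2) powr \<nu> / Gamma (\<nu> + 1) * (z ^ (2 * k) / fact (2 * k))"
proof -
  have "\<nu> + 1 \<notin> \<int>\<^sub>\<le>\<^sub>0" and "Gamma (\<nu> + 1) > 0" and "pochhammer (\<nu> + 1) k > 0"
    using assms by (auto elim!: nonpos_Ints_cases intro: pochhammer_pos)
  have "(z / 2) powr (2 * real k) = z ^ (2 * k) / 4 ^ k"
    using powr_realpow[of "z / 2" "2 * k"] assms(2) by (simp add: power_divide power_mult)
  then have "(z / 2) powr (2 * real k + \<nu>) / (fact k * Gamma (real k + \<nu> + 1))
      = (z / 2) powr \<nu> / Gamma (\<nu> + 1) * (z ^ (2 * k) / (4 ^ k * fact k * pochhammer (\<nu> + 1) k))"
    using Gamma_add_of_nat[of "\<nu> + 1" k] \<open>\<nu> + 1 \<notin> \<int>\<^sub>\<le>\<^sub>0\<close>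
    by (simp add: powr_add add_ac)
  also have "\<dots> \<le> (z / 2) powr \<nu> / Gamma (\<nu> + 1) * (z ^ (2 * k) / fact (2 * k))"
    using fact_double_le_pochhammer[of "\<nu> + 1" k] \<open>Gamma (\<nu> + 1) > 0\<close> \<open>pochhammer (\<nu> + 1) k > 0\<close> assms
    by (intro mult_left_mono divide_left_mono) auto
  finally show ?thesis .
qed

lemma besselI_bounds:
  fixes \<nu> z :: real
  assumes "\<nu> \<ge> -1/2" and "z > 0"
  shows besselI_ge: "(z / 2) powr \<nu> / Gamma (\<nu> + 1) \<le> besselI \<nu> z"
    and besselI_le: "besselI \<nu> z \<le> (z / 2) powr \<nu> / Gamma (\<nu> + 1) * exp z"
proof -
  define t where "t k = (z / 2) powr (2 * real k + \<nu>) / (fact k * Gamma (real k + \<nu> + 1))" for k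
  define C where "C = (z / 2) powr \<nu> / Gamma (\<nu> + 1)"
  have t_nonneg: "0 \<le> t k" for k
    using assms unfolding t_def by (intro divide_nonneg_pos mult_pos_pos Gamma_real_pos) auto
  have t_le: "t k \<le> C * (z ^ (2 * k) / fact (2 * k))" for k
    unfolding t_def C_def using besselI_term_le[OF assms] .
  have majorant: "(\<lambda>k. C * (z ^ (2 * k) / fact (2 * k))) sums (C * cosh z)"
    by (intro sums_mult cosh_sums_even)
  have "summable t"
    using t_nonneg t_le by (intro summable_comparison_test[OF _ sums_summable[OF majorant]]) auto
  have besselI_eq: "besselI \<nu> z = suminf t"
    unfolding besselI_def t_def ..
  have "sum t {0} \<le> suminf t"
    using \<open>summable t\<close> t_nonneg by (intro sum_le_suminf) auto
  then show "C \<le> besselI \<nu> z"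
    by (simp add: besselI_eq t_def C_def)
  have "suminf t \<le> C * cosh z"
    using suminf_le[OF t_le \<open>summable t\<close> sums_summable[OF majorant]] sums_unique[OF majorant] by simp
  also have "\<dots> \<le> C * exp z"
    using assms unfolding C_def by (intro mult_left_mono) (auto simp: cosh_def)
  finally show "besselI \<nu> z \<le> C * exp z"
    unfolding besselI_eq .
qed

lemma bessel_kernel_bounds:
  fixes \<nu> c t u x :: real
  assumes "\<nu> \<ge> -1/2" and "c > 0" and "t > 0" and "u > 0" and "x > 0"
  defines "K \<equiv> c powr \<nu> * (u * t) powr (\<nu> / 2) / Gamma (\<nu> + 1)"
  shows "K * exp (- c * t * x)
           \<le> x powr (- \<nu> / 2) * exp (- c * t * x) * besselI \<nu> (2 * c * sqrt (u * x * t))"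
    and "x powr (- \<nu> / 2) * exp (- c * t * x) * besselI \<nu> (2 * c * sqrt (u * x * t))
           \<le> K * exp (c * u)"
proof -
  define z where "z = 2 * c * sqrt (u * x * t)"
  have "z > 0"
    using assms unfolding z_def by simp
  have "(z / 2) powr \<nu> = c powr \<nu> * (u * t) powr (\<nu> / 2) * x powr (\<nu> / 2)"
    using assms unfolding z_def
    by (simp add: powr_mult powr_half_sqrt[symmetric] powr_powr mult_ac)
  then have K_eq: "x powr (- \<nu> / 2) * ((z / 2) powr \<nu> / Gamma (\<nu> + 1)) = K"
    using assms(5) unfolding K_def by (simp add: powr_minus field_simps)
  have "0 \<le> K"
    using assms unfolding K_def by simp
  have "K * exp (- c * t * x) = x powr (- \<nu> / 2) * exp (- c * t * x) * ((z / 2) powr \<nu> / Gamma (\<nu> + 1))"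
    unfolding K_eq[symmetric] by (simp add: mult_ac)
  also have "\<dots> \<le> x powr (- \<nu> / 2) * exp (- c * t * x) * besselI \<nu> z"
    using assms \<open>z > 0\<close> by (intro mult_left_mono besselI_ge) auto
  finally have "K * exp (- c * t * x) \<le> x powr (- \<nu> / 2) * exp (- c * t * x) * besselI \<nu> z" .
  then show "K * exp (- c * t * x)
      \<le> x powr (- \<nu> / 2) * exp (- c * t * x) * besselI \<nu> (2 * c * sqrt (u * x * t))"
    unfolding z_def .
  \<comment> \<open>AM-GM: the growth \<open>e\<^sup>z\<close> of the Bessel function is paid for by \<open>e\<^sup>-\<^sup>c\<^sup>t\<^sup>x\<close>.\<close>
  have "z \<le> c * (u + t * x)"
    using arith_geo_mean_sqrt[of u "x * t"] assms unfolding z_def by (simp add: mult_ac)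
  have "x powr (- \<nu> / 2) * exp (- c * t * x) * besselI \<nu> z
      \<le> x powr (- \<nu> / 2) * exp (- c * t * x) * ((z / 2) powr \<nu> / Gamma (\<nu> + 1) * exp z)"
    using assms \<open>z > 0\<close> by (intro mult_left_mono besselI_le) auto
  also have "\<dots> = K * exp (- c * t * x + z)"
    unfolding K_eq[symmetric] exp_add by (simp add: mult_ac)
  also have "\<dots> \<le> K * exp (c * u)"
    using \<open>z \<le> c * (u + t * x)\<close> \<open>0 \<le> K\<close> by (intro mult_left_mono) (auto simp: algebra_simps)
  finally show "x powr (- \<nu> / 2) * exp (- c * t * x) * besselI \<nu> (2 * c * sqrt (u * x * t))
      \<le> K * exp (c * u)"
    unfolding z_def .
qed

lemma besselI_measurable [measurable]: "besselI \<nu> \<in> borel_measurable borel"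
  unfolding besselI_def by measurable

lemma
  fixes M :: "real measure"
  assumes "prob_space M" and "sets M = sets borel" and "AE x in M. 0 \<le> x" and "0 \<le> d"
  shows integrable_exp_neg_mult: "integrable M (\<lambda>x. exp (- d * x))"
    and integral_exp_neg_mult_pos: "0 < (LINT x|M. exp (- d * x))"
proof -
  interpret prob_space M by fact
  show int: "integrable M (\<lambda>x. exp (- d * x))"
  proof (rule integrable_const_bound[where B = 1])
    show "AE x in M. norm (exp (- d * x)) \<le> 1"
      using assms(3) by eventually_elim (use assms(4) in auto)
  qed (use assms(2) in measurable)
  have "(LINT x|M. exp (- d * x)) \<noteq> 0"
    using integral_nonneg_eq_0_iff_AE[OF int] by auto
  moreover have "0 \<le> (LINT x|M. exp (- d * x))"
    by (intro integral_nonneg_AE) auto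
  ultimately show "0 < (LINT x|M. exp (- d * x))"
    by linarith
qed

lemma integral_bessel_kernel_bounds:
  fixes M :: "real measure" and \<nu> c t u d :: real
  assumes "prob_space M" and "sets M = sets borel" and "AE x in M. 0 < x"
    and "\<nu> \<ge> -1/2" and "c > 0" and "t > 0" and "u > 0" and "c * t \<le> d"
  defines "K \<equiv> c powr \<nu> * (u * t) powr (\<nu> / 2) / Gamma (\<nu> + 1)"
    and "F \<equiv> \<lambda>x. x powr (- \<nu> / 2) * exp (- c * t * x) * besselI \<nu> (2 * c * sqrt (u * x * t))"
  shows "K * (LINT x|M. exp (- d * x)) \<le> integral\<^sup>L M F"
    and "integral\<^sup>L M F \<le> K * exp (c * u)"
proof -
  interpret prob_space M by fact
  have kernel: "K * exp (- c * t * x) \<le> F x" "F x \<le> K * exp (c * u)" if "0 < x" for x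
    using bessel_kernel_bounds[OF assms(4-7) that] unfolding K_def F_def by auto
  have "0 \<le> K"
    using assms unfolding K_def by simp
  have F_meas: "F \<in> borel_measurable M"
    using assms(2) unfolding F_def by measurable
  have F_int: "integrable M F"
  proof (rule integrable_const_bound[where B = "K * exp (c * u)"])
    show "AE x in M. norm (F x) \<le> K * exp (c * u)"
      using assms(3)
    proof eventually_elim
      case (elim x)
      have "0 \<le> K * exp (- c * t * x)"
        using \<open>0 \<le> K\<close> by simp
      then show ?case
        using kernel[OF elim] by simp
    qed
  qed (fact F_meas)
  have "0 < d"
    using mult_pos_pos[OF assms(5,6)] assms(8) by linarith
  then have exp_int: "integrable M (\<lambda>x. exp (- d * x))"
    using assms(3) by (intro integrable_exp_neg_mult[OF assms(1,2)]) (auto elim: eventually_mono)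
  have "K * (LINT x|M. exp (- d * x)) = (LINT x|M. K * exp (- d * x))"
    by simp
  also have "\<dots> \<le> integral\<^sup>L M F"
  proof (rule integral_mono_AE[OF _ F_int])
    show "integrable M (\<lambda>x. K * exp (- d * x))"
      using exp_int by simp
    show "AE x in M. K * exp (- d * x) \<le> F x"
      using assms(3)
    proof eventually_elim
      case (elim x)
      have "- d * x \<le> - c * t * x"
        using assms(8) elim by (simp add: mult_right_mono)
      then have "K * exp (- d * x) \<le> K * exp (- c * t * x)"
        using \<open>0 \<le> K\<close> by (intro mult_left_mono) auto
      then show ?case
        using kernel[OF elim] by simp
    qed
  qed
  finally show "K * (LINT x|M. exp (- d * x)) \<le> integral\<^sup>L M F" .
  have "integral\<^sup>L M F \<le> (LINT x|M. K * exp (c * u))"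
    by (rule integral_mono_AE[OF F_int]) (use assms(3) kernel in \<open>auto elim!: eventually_mono\<close>)
  then show "integral\<^sup>L M F \<le> K * exp (c * u)"
    by (simp add: prob_space)
qed

lemma gamma_path_density_bounds:
  fixes PX :: "real measure"
  assumes "prob_space PX" and "sets PX = sets borel" and "AE x in PX. 0 < x"
    and "\<alpha> \<ge> 1/2" and "lam > 0" and "0 < \<tau>" and "\<tau> < 1" and "u > 0"
    and "lam * \<tau> / (1 - \<tau>) \<le> d"
  defines "c \<equiv> lam / (1 - \<tau>)"
  shows "c powr \<alpha> * u powr (\<alpha> - 1) / Gamma \<alpha> * (exp (- c * u) * (LINT x|PX. exp (- d * x)))
           \<le> gamma_path_density PX \<alpha> lam \<tau> u"
    and "gamma_path_density PX \<alpha> lam \<tau> u \<le> c powr \<alpha> * u powr (\<alpha> - 1) / Gamma \<alpha>"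
proof -
  define K where "K = c powr (\<alpha> - 1) * (u * \<tau>) powr ((\<alpha> - 1) / 2) / Gamma (\<alpha> - 1 + 1)"
  define I where "I = (LINT x|PX. x powr (- (\<alpha> - 1) / 2) * exp (- c * \<tau> * x)
                         * besselI (\<alpha> - 1) (2 * c * sqrt (u * x * \<tau>)))"
  define P where "P = c * (u / \<tau>) powr ((\<alpha> - 1) / 2)"
  have "c > 0"
    using assms unfolding c_def by simp
  have "c * \<tau> \<le> d"
    using assms(9) unfolding c_def by simp
  note I_bounds = integral_bessel_kernel_bounds[OF assms(1-3) _ \<open>c > 0\<close> assms(6,8) \<open>c * \<tau> \<le> d\<close>,
      of "\<alpha> - 1", folded K_def I_def]
  have density_eq: "gamma_path_density PX \<alpha> lam \<tau> u = P * exp (- c * u) * I"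
    unfolding gamma_path_density_def P_def I_def c_def by (simp add: mult_ac)
  have PK_eq: "P * K = c powr \<alpha> * u powr (\<alpha> - 1) / Gamma \<alpha>"
  proof -
    have "(u / \<tau>) powr ((\<alpha> - 1) / 2) * (u * \<tau>) powr ((\<alpha> - 1) / 2) = u powr (\<alpha> - 1)"
      using assms(6,8) by (simp add: powr_divide powr_mult powr_add[symmetric])
    moreover have "c * c powr (\<alpha> - 1) = c powr \<alpha>"
      using powr_add[of c 1 "\<alpha> - 1"] \<open>c > 0\<close> by simp
    ultimately show ?thesis
      unfolding P_def K_def by (simp add: field_simps)
  qed
  have "0 < P * exp (- c * u)"
    using \<open>c > 0\<close> assms unfolding P_def by simp
  then have "P * exp (- c * u) * (K * (LINT x|PX. exp (- d * x))) \<le> gamma_path_density PX \<alpha> lam \<tau> u"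
    unfolding density_eq using I_bounds(1) assms(4) by (intro mult_left_mono) auto
  then show "c powr \<alpha> * u powr (\<alpha> - 1) / Gamma \<alpha> * (exp (- c * u) * (LINT x|PX. exp (- d * x)))
      \<le> gamma_path_density PX \<alpha> lam \<tau> u"
    unfolding PK_eq[symmetric] by (simp add: mult_ac)
  have "gamma_path_density PX \<alpha> lam \<tau> u \<le> P * exp (- c * u) * (K * exp (c * u))"
    unfolding density_eq using \<open>0 < P * exp (- c * u)\<close> I_bounds(2) assms(4) by (intro mult_left_mono) auto
  then show "gamma_path_density PX \<alpha> lam \<tau> u \<le> c powr \<alpha> * u powr (\<alpha> - 1) / Gamma \<alpha>"
    unfolding PK_eq[symmetric] by (simp add: exp_minus field_simps)
qed

lemma abs_ln_le_max:
  fixes l g h :: real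
  assumes "0 < l" and "l \<le> g" and "g \<le> h"
  shows "\<bar>ln g\<bar> \<le> max \<bar>ln l\<bar> \<bar>ln h\<bar>"
proof -
  have "ln l \<le> ln g" and "ln g \<le> ln h"
    using assms by auto
  then show ?thesis
    by linarith
qed

lemma abs_ln_gamma_path_density_le:
  fixes PX :: "real measure"
  assumes "prob_space PX" and "sets PX = sets borel" and "AE x in PX. 0 < x"
    and "\<alpha> \<ge> 1/2" and "lam > 0" and "0 < \<tau>" and "\<tau> < 1" and "u > 0"
    and "lam * \<tau> / (1 - \<tau>) \<le> d"
  defines "c \<equiv> lam / (1 - \<tau>)" and "m \<equiv> LINT x|PX. exp (- d * x)"
  shows "\<bar>ln (gamma_path_density PX \<alpha> lam \<tau> u)\<bar>
           \<le> \<alpha> * \<bar>ln c\<bar> + \<bar>\<alpha> - 1\<bar> * \<bar>ln u\<bar> + \<bar>ln (Gamma \<alpha>)\<bar> + c * u + \<bar>ln m\<bar>"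
proof -
  define Q where "Q = c powr \<alpha> * u powr (\<alpha> - 1) / Gamma \<alpha>"
  note bounds = gamma_path_density_bounds[OF assms(1-9), folded c_def m_def, folded Q_def]
  have "c > 0" and "Gamma \<alpha> > 0" and "0 < d"
    using assms unfolding c_def by (auto intro: less_le_trans[OF _ assms(9)])
  have "Q > 0"
    using \<open>c > 0\<close> \<open>Gamma \<alpha> > 0\<close> assms(8) unfolding Q_def by simp
  have "m > 0"
    unfolding m_def using assms(3) \<open>0 < d\<close>
    by (intro integral_exp_neg_mult_pos[OF assms(1,2)]) (auto elim: eventually_mono)
  have ln_Q: "ln Q = \<alpha> * ln c + (\<alpha> - 1) * ln u - ln (Gamma \<alpha>)"
    using \<open>c > 0\<close> \<open>Gamma \<alpha> > 0\<close> assms(8) unfolding Q_def by (simp add: ln_div ln_mult)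
  have "\<bar>ln (gamma_path_density PX \<alpha> lam \<tau> u)\<bar> \<le> max \<bar>ln (Q * (exp (- c * u) * m))\<bar> \<bar>ln Q\<bar>"
    using bounds \<open>Q > 0\<close> \<open>m > 0\<close> by (intro abs_ln_le_max) auto
  also have "\<dots> \<le> \<bar>ln Q\<bar> + c * u + \<bar>ln m\<bar>"
    using \<open>Q > 0\<close> \<open>m > 0\<close> mult_pos_pos[OF \<open>c > 0\<close> assms(8)] by (simp add: ln_mult)
  also have "\<bar>ln Q\<bar> \<le> \<alpha> * \<bar>ln c\<bar> + \<bar>\<alpha> - 1\<bar> * \<bar>ln u\<bar> + \<bar>ln (Gamma \<alpha>)\<bar>"
    unfolding ln_Q using assms(4) abs_mult[of \<alpha> "ln c"] abs_mult[of "\<alpha> - 1" "ln u"] by arith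
  finally show ?thesis
    by simp
qed

theorem lemma7p4:
  fixes M :: "'a measure" and X :: "'a \<Rightarrow> real"
    and \<alpha> lam a b :: real
  assumes "prob_space M"
    and "X \<in> borel_measurable M"
    and "AE \<omega> in M. X \<omega> > 0"
    and "\<alpha> \<ge> 1 / 2" and "lam > 0"
    and "0 < a" and "a < b" and "b < 1"
  shows "\<exists>A > 0. \<forall>\<tau> \<in> {a<..<b}. \<forall>u > 0.
           \<bar>ln (gamma_path_density (distr M borel X) \<alpha> lam \<tau> u)\<bar>
             \<le> A + 2 * lam * u / (1 - b) + \<bar>\<alpha> - 1\<bar> * \<bar>ln u\<bar>"
proof -
  define PX where "PX = distr M borel X"
  define d where "d = lam * b / (1 - b)"
  define L where "L = \<bar>ln (lam / (1 - a))\<bar> + \<bar>ln (lam / (1 - b))\<bar>"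
  define A where "A = \<alpha> * L + \<bar>ln (Gamma \<alpha>)\<bar> + \<bar>ln (LINT x|PX. exp (- d * x))\<bar> + 1"
  have law: "prob_space PX" "sets PX = sets borel" "AE x in PX. 0 < x"
    unfolding PX_def using assms(1-3) by (auto simp: prob_space.prob_space_distr AE_distr_iff)
  have "0 < A"
    using assms(4) unfolding A_def L_def by (simp add: add_nonneg_pos)
  show ?thesis
    unfolding PX_def[symmetric]
  proof (intro exI[of _ A] conjI ballI allI impI \<open>0 < A\<close>)
    fix \<tau> u :: real
    assume "\<tau> \<in> {a<..<b}" and "u > 0"
    then have "0 < \<tau>" "\<tau> < 1" "a < \<tau>" "\<tau> < b"
      using assms(6,8) by auto
    define c where "c = lam / (1 - \<tau>)"
    have c_ge: "lam / (1 - a) \<le> c" and c_le: "c \<le> lam / (1 - b)" and "lam * \<tau> / (1 - \<tau>) \<le> d"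
      unfolding c_def d_def using \<open>a < \<tau>\<close> \<open>\<tau> < b\<close> assms(5-8) by (auto intro!: frac_le)
    have "\<bar>ln c\<bar> \<le> L"
      using abs_ln_le_max[OF _ c_ge c_le] assms(5,7,8) unfolding L_def by simp
    have "c * u \<le> lam / (1 - b) * u"
      using c_le \<open>u > 0\<close> by (intro mult_right_mono) auto
    also have "\<dots> \<le> 2 * lam * u / (1 - b)"
      using mult_pos_pos[OF assms(5) \<open>u > 0\<close>] assms(8) by (simp add: divide_right_mono)
    finally show "\<bar>ln (gamma_path_density PX \<alpha> lam \<tau> u)\<bar>
        \<le> A + 2 * lam * u / (1 - b) + \<bar>\<alpha> - 1\<bar> * \<bar>ln u\<bar>"
      using abs_ln_gamma_path_density_le[OF law assms(4,5) \<open>0 < \<tau>\<close> \<open>\<tau> < 1\<close> \<open>u > 0\<close>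
          \<open>lam * \<tau> / (1 - \<tau>) \<le> d\<close>, folded c_def]
        mult_left_mono[OF \<open>\<bar>ln c\<bar> \<le> L\<close>, of \<alpha>] assms(4)
      unfolding A_def by linarith
  qed
qed

end
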